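(* Let $\mathbb V,\mathbb W$ be separable Banach spaces, $\mathcal P_N^{\mathbb V},\mathcal P_N^{\mathbb W}$ finite-dimensional projections converging strongly to the identity on $\mathbb V,\mathbb W$, and let $\mathcal L=\mathcal L_0+\mathcal L_1$, $\mathcal N=\mathcal N_0+\mathcal N_1$, $\mathcal N_{1,N}$, $\mathcal K_N$, $\mathcal K$ satisfy all of the following: $\mathcal L:\mathbb V\to\mathbb W$ is admissible and invertible with invertible left-Fredholm regulator $\mathcal N$, $\mathcal N\mathcal L=\mathrm{id}-\mathcal K$ with $\mathcal K$ compact; $\mathcal N_{1,N}:\operatorname{ran}\mathcal P_N^{\mathbb W}\to\operatorname{ran}\mathcal P_N^{\mathbb V}$ and $\mathcal K_N:\mathbb V\to\mathbb V$ satisfy $(\mathcal N_0+\mathcal N_{1,N})(\mathcal L_0+\mathcal P_N^{\mathbb W}\mathcal L_1)=\mathrm{id}-\mathcal K_N$ on $\operatorname{ran}\mathcal P_N^{\mathbb V}$ and $\|\mathcal K_N-\mathcal K\|_{\mathbb V}\to0$; and $\dim\operatorname{ran}\mathcal P_N^{\mathbb V}=\dim\operatorname{ran}\mathcal P_N^{\mathbb W}$. Let $\mathbb W'\subset\mathbb W$ be a dense subspace and $\mathcal I_N^{\mathbb W}$ projections with $\|u-\mathcal I_N^{\mathbb W}u\|_{\mathbb W}\to0$ for every $u\in\mathbb W'$ and $\mathcal I_N^{\mathbb W}\mathbb W'=\operatorname{ran}\mathcal P_N^{\mathbb W}$. Suppose that, for sufficiently large $N$, $\mathcal L_0+\mathcal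 I_N^{\mathbb W}\mathcal L_1:\operatorname{ran}\mathcal P_N^{\mathbb V}\to\operatorname{ran}\mathcal P_N^{\mathbb W}$ is invertible. Then for $f\in\mathbb W'$ and such $N$, $$\|(\mathcal L_0+\mathcal P_N^{\mathbb W}\mathcal L_1)^{-1}\mathcal P_N^{\mathbb W}f-(\mathcal L_0+\mathcal I_N^{\mathbb W}\mathcal L_1)^{-1}\mathcal I_N^{\mathbb W}f\|_{\mathbb V}\le\|(\mathcal L_0+\mathcal I_N^{\mathbb W}\mathcal L_1)^{-1}\|_{\operatorname{ran}\mathcal I_N^{\mathbb W}\to\operatorname{ran}\mathcal P_N^{\mathbb V}}\,\|(\mathcal I_N^{\mathbb W}-\mathcal P_N^{\mathbb W})(f-\mathcal L_1u_N)\|_{\mathbb W},$$ where $u_N=(\mathcal L_0+\mathcal P_N^{\mathbb W}\mathcal L_1)^{-1}\mathcal P_N^{\mathbb W}f$.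
   Context: A bounded linear operator $\mathcal L:\mathbb V\to\mathbb W$ is left Fredholm with regulator $\mathcal N:\mathbb W\to\mathbb V$ if $\mathcal N\mathcal L=\mathrm{id}-\mathcal K$ with $\mathcal K$ compact on $\mathbb V$. It is admissible if $\mathcal L=\mathcal L_0+\mathcal L_1$ with $\mathcal L_0\mathcal P_N^{\mathbb V}=\mathcal P_N^{\mathbb W}\mathcal L_0$, $\mathcal L$ is left Fredholm with regulator $\mathcal N$, and $\mathcal N=\mathcal N_0+\mathcal N_1$ with $\mathcal N_0\mathcal P_N^{\mathbb W}=\mathcal P_N^{\mathbb V}\mathcal N_0$. *)

theory Defs
  imports "HOL-Analysis.Analysis"
begin

definition compact_operator :: "('a::real_normed_vector \<Rightarrow> 'b::real_normed_vector) \<Rightarrow> bool" where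
  "compact_operator K \<longleftrightarrow> bounded_linear K \<and> compact (closure (K ` cball 0 1))"

definition fin_dim_subspace :: "'a::real_vector set \<Rightarrow> bool" where
  "fin_dim_subspace S \<longleftrightarrow> (\<exists>B. finite B \<and> S = span B)"

definition bounded_projection :: "('a::real_normed_vector \<Rightarrow> 'a) \<Rightarrow> bool" where
  "bounded_projection P \<longleftrightarrow> bounded_linear P \<and> (\<forall>x. P (P x) = P x)"

definition left_fredholm ::
  "('v::real_normed_vector \<Rightarrow> 'w::real_normed_vector) \<Rightarrow> ('w \<Rightarrow> 'v) \<Rightarrow> bool" where
  "left_fredholm L R \<longleftrightarrow> bounded_linear L \<and> bounded_linear R \<and>
     compact_operator (\<lambda>x. x - R (L x))"

definition admissible ::
  "(nat \<Rightarrow> 'v::real_normed_vector \<Rightarrow> 'v) \<Rightarrow> (nat \<Rightarrow> 'w::real_normed_vector \<Rightarrow> 'w) \<Rightarrow>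
   ('v \<Rightarrow> 'w) \<Rightarrow> ('v \<Rightarrow> 'w) \<Rightarrow> ('v \<Rightarrow> 'w) \<Rightarrow>
   ('w \<Rightarrow> 'v) \<Rightarrow> ('w \<Rightarrow> 'v) \<Rightarrow> ('w \<Rightarrow> 'v) \<Rightarrow> bool" where
  "admissible PV PW L L0 L1 R R0 R1 \<longleftrightarrow>
     bounded_linear L0 \<and> bounded_linear L1 \<and> (\<forall>x. L x = L0 x + L1 x) \<and>
     (\<forall>N x. L0 (PV N x) = PW N (L0 x)) \<and>
     left_fredholm L R \<and>
     bounded_linear R0 \<and> bounded_linear R1 \<and> (\<forall>y. R y = R0 y + R1 y) \<and>
     (\<forall>N y. R0 (PW N y) = PV N (R0 y))"

text \<open>Operator norm of T restricted to the subspace S (S is a finite-dimensional subspace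
  in all uses, so the supremum is finite).\<close>
definition opnorm_on :: "'a::real_normed_vector set \<Rightarrow> ('a \<Rightarrow> 'b::real_normed_vector) \<Rightarrow> real" where
  "opnorm_on S T = Sup ((\<lambda>x. norm (T x)) ` {x \<in> S. norm x \<le> 1})"

end

theory Submission
  imports Defs
begin

(* For fixed N the estimate is pure linear algebra. Write A_P = L0 + P_N L1 and
   A_I = L0 + I_N L1. Since A_P u_N = P_N f gives L0 u_N = P_N f - P_N L1 u_N, applying A_I to
   A_I^-1 I_N f - u_N yields exactly (I_N - P_N)(f - L1 u_N); the bound is then the definition of
   the operator norm of A_I^-1, which is finite because linear maps on finite-dimensional
   subspaces are bounded (proved by induction on a spanning set, using that finite-dimensional
   subspaces are closed).
   The only analysis is the invertibility of A_P for large N. As K is compact and id - K = R L is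
   injective, id - K is bounded below; as K_N -> K in operator norm, id - K_N is injective for
   large N, hence so is A_P on ran P_N^V by the regulator identity, and equal dimensions make it
   bijective. *)

lemma infdist_subspace_scaled_le:
  fixes a :: "'a::real_normed_vector"
  assumes "subspace S" and "z \<in> S"
  shows "\<bar>t\<bar> * infdist a S \<le> norm (t *\<^sub>R a + z)"
proof (cases "t = 0")
  case False
  have "- ((1 / t) *\<^sub>R z) \<in> S"
    using assms by (simp add: subspace_neg subspace_scale)
  then have "infdist a S \<le> norm (a + (1 / t) *\<^sub>R z)"
    using infdist_le by (fastforce simp: dist_norm)
  then have "\<bar>t\<bar> * infdist a S \<le> norm (t *\<^sub>R (a + (1 / t) *\<^sub>R z))"
    by (simp add: mult_left_mono)
  also have "t *\<^sub>R (a + (1 / t) *\<^sub>R z) = t *\<^sub>R a + z"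
    using False by (simp add: scaleR_add_right)
  finally show ?thesis .
qed simp

lemma closed_span_insert:
  fixes a :: "'a::real_normed_vector"
  assumes closed: "closed (span A)"
  shows "closed (span (insert a A))"
proof (cases "a \<in> span A")
  case True
  then show ?thesis using closed by (simp add: span_redundant)
next
  case False
  define d where "d = infdist a (span A)"
  have "d > 0"
    unfolding d_def using infdist_pos_not_in_closed[OF closed] False span_zero by blast
  show ?thesis
    unfolding closed_sequential_limits
  proof (intro allI impI, elim conjE)
    fix y l assume "\<forall>n. y n \<in> span (insert a A)" and "y \<longlonglongrightarrow> l"
    then have "\<forall>n. \<exists>k. y n - k *\<^sub>R a \<in> span A"
      by (simp add: span_insert)
    then obtain k where k: "\<And>n. y n - k n *\<^sub>R a \<in> span A"
      by metis
    have k_dist: "\<bar>k m - k n\<bar> * d \<le> dist (y m) (y n)" for m n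
    proof -
      have "(y m - k m *\<^sub>R a) - (y n - k n *\<^sub>R a) \<in> span A"
        using k by (simp add: span_diff)
      from infdist_subspace_scaled_le[OF subspace_span this, of "k m - k n" a]
      show ?thesis by (simp add: d_def dist_norm algebra_simps)
    qed
    have "Cauchy k"
    proof (rule metric_CauchyI)
      fix e :: real assume "e > 0"
      with \<open>d > 0\<close> obtain M where "\<And>m n. m \<ge> M \<Longrightarrow> n \<ge> M \<Longrightarrow> dist (y m) (y n) < e * d"
        using LIMSEQ_imp_Cauchy[OF \<open>y \<longlonglongrightarrow> l\<close>] unfolding Cauchy_def
        by (metis mult_pos_pos)
      then show "\<exists>M. \<forall>m\<ge>M. \<forall>n\<ge>M. dist (k m) (k n) < e"
        using k_dist \<open>d > 0\<close> by (metis dist_real_def le_less_trans mult_less_cancel_right_pos)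
    qed
    then obtain t where "k \<longlonglongrightarrow> t"
      using Cauchy_convergent_iff convergent_def by blast
    with \<open>y \<longlonglongrightarrow> l\<close> have "(\<lambda>n. y n - k n *\<^sub>R a) \<longlonglongrightarrow> l - t *\<^sub>R a"
      by (intro tendsto_intros)
    then have "l - t *\<^sub>R a \<in> span A"
      using closed_sequentially[OF closed, of "\<lambda>n. y n - k n *\<^sub>R a"] k by blast
    then show "l \<in> span (insert a A)"
      unfolding span_insert by blast
  qed
qed

lemma linear_bounded_on_span_insert:
  fixes g :: "'a::real_normed_vector \<Rightarrow> 'b::real_normed_vector"
  assumes closed: "closed (span A)" and "linear g"
    and bound: "\<And>y. y \<in> span A \<Longrightarrow> norm (g y) \<le> M * norm y"
  shows "\<exists>M'. \<forall>y\<in>span (insert a A). norm (g y) \<le> M' * norm y"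
proof (cases "a \<in> span A")
  case True
  then show ?thesis using bound by (auto simp: span_redundant)
next
  case False
  define d where "d = infdist a (span A)"
  have "d > 0"
    unfolding d_def using infdist_pos_not_in_closed[OF closed] False span_zero by blast
  define M1 where "M1 = \<bar>M\<bar>"
  have M1: "norm (g y) \<le> M1 * norm y" if "y \<in> span A" for y
    using bound[OF that] unfolding M1_def
    by (meson abs_ge_self mult_right_mono norm_ge_zero order_trans)
  show ?thesis
  proof (intro exI ballI)
    fix y assume "y \<in> span (insert a A)"
    then obtain k where "y - k *\<^sub>R a \<in> span A"
      unfolding span_insert by blast
    moreover define z where "z = y - k *\<^sub>R a"
    ultimately have z: "z \<in> span A" and y: "y = k *\<^sub>R a + z"
      by simp_all
    have "\<bar>k\<bar> * d \<le> norm y"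
      using infdist_subspace_scaled_le[OF subspace_span z, of k a] y by (simp add: d_def)
    then have k: "\<bar>k\<bar> \<le> norm y / d"
      using \<open>d > 0\<close> by (simp add: field_simps)
    have "norm (g y) \<le> \<bar>k\<bar> * norm (g a) + M1 * norm z"
      using M1[OF z] \<open>linear g\<close>
      by (simp add: y linear_add linear_scale) (metis norm_scaleR norm_triangle_le add_left_mono)
    also have "\<dots> \<le> \<bar>k\<bar> * norm (g a) + M1 * (norm y + \<bar>k\<bar> * norm a)"
      unfolding M1_def z_def by (intro add_left_mono mult_left_mono) (auto intro: norm_triangle_le_diff)
    also have "\<dots> = \<bar>k\<bar> * (norm (g a) + M1 * norm a) + M1 * norm y"
      by (simp add: algebra_simps)
    also have "\<dots> \<le> (norm y / d) * (norm (g a) + M1 * norm a) + M1 * norm y"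
      using k unfolding M1_def by (intro add_right_mono mult_right_mono) auto
    also have "\<dots> = ((norm (g a) + M1 * norm a) / d + M1) * norm y"
      by (simp add: algebra_simps add_divide_distrib)
    finally show "norm (g y) \<le> ((norm (g a) + M1 * norm a) / d + M1) * norm y" .
  qed
qed

lemma closed_span_finite:
  fixes C :: "'a::real_normed_vector set"
  assumes "finite C"
  shows "closed (span C)"
  using assms by induction (simp_all add: closed_span_insert)

lemma linear_bounded_on_span_finite:
  fixes g :: "'a::real_normed_vector \<Rightarrow> 'b::real_normed_vector"
  assumes "finite C" and "linear g"
  shows "\<exists>M. \<forall>y\<in>span C. norm (g y) \<le> M * norm y"
  using assms(1)
proof induction
  case empty
  then show ?case using \<open>linear g\<close> by (simp add: linear_0)
next
  case (insert a A)
  then show ?case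
    using linear_bounded_on_span_insert[OF closed_span_finite \<open>linear g\<close>] by blast
qed

lemma opnorm_on_cong:
  assumes "\<And>x. x \<in> S \<Longrightarrow> g x = h x"
  shows "opnorm_on S g = opnorm_on S h"
  unfolding opnorm_on_def using assms by (intro arg_cong[where f = Sup] image_cong) auto

lemma norm_le_opnorm_on:
  fixes g :: "'a::real_normed_vector \<Rightarrow> 'b::real_normed_vector"
  assumes S: "fin_dim_subspace S" and g: "linear g" and y: "y \<in> S"
  shows "norm (g y) \<le> opnorm_on S g * norm y"
proof (cases "y = 0")
  case True
  then show ?thesis using g by (simp add: linear_0)
next
  case False
  obtain C where "finite C" and S_eq: "S = span C"
    using S unfolding fin_dim_subspace_def by blast
  then obtain M where M: "\<And>x. x \<in> S \<Longrightarrow> norm (g x) \<le> M * norm x"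
    using linear_bounded_on_span_finite[OF _ g] by blast
  have "bdd_above ((\<lambda>x. norm (g x)) ` {x \<in> S. norm x \<le> 1})"
  proof (rule bdd_aboveI2)
    fix x assume x: "x \<in> {x \<in> S. norm x \<le> 1}"
    then have "norm (g x) \<le> M * norm x"
      using M by blast
    also have "\<dots> \<le> \<bar>M\<bar> * norm x"
      by (simp add: mult_right_mono)
    also have "\<dots> \<le> \<bar>M\<bar>"
      using x by (simp add: mult_left_le)
    finally show "norm (g x) \<le> \<bar>M\<bar>" .
  qed
  moreover define x where "x = (1 / norm y) *\<^sub>R y"
  moreover have "x \<in> S" and "norm x = 1"
    using y False unfolding x_def S_eq by (simp_all add: span_scale)
  ultimately have "norm (g x) \<le> opnorm_on S g"
    unfolding opnorm_on_def by (intro cSup_upper) auto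
  moreover have "g y = norm y *\<^sub>R g x"
    using g False unfolding x_def by (simp add: linear_scale)
  ultimately show ?thesis
    by (simp add: mult.commute mult_left_mono)
qed

lemma linear_extension_the_inv_into:
  fixes F :: "'a::real_vector \<Rightarrow> 'b::real_vector"
  assumes "linear F" and "subspace S" and "inj_on F S"
  obtains g where "linear g" and "\<And>y. y \<in> F ` S \<Longrightarrow> the_inv_into S F y = g y"
proof -
  have "span S = S"
    using assms(2) by simp
  then obtain g where "linear g" and g: "\<forall>x\<in>S. g (F x) = x"
    using linear_inj_on_left_inverse[OF assms(1), of S] assms(3) by metis
  show thesis
  proof (rule that[OF \<open>linear g\<close>])
    fix y assume "y \<in> F ` S"
    then show "the_inv_into S F y = g y"
      using g the_inv_into_f_f[OF assms(3)] by auto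
  qed
qed

lemma linear_inj_on_image_eq:
  fixes f :: "'a::real_vector \<Rightarrow> 'b::real_vector"
  assumes f: "linear f" and S: "subspace S" and inj: "inj_on f S" and into: "f ` S \<subseteq> T"
    and T: "fin_dim_subspace T" and dims: "dim S = dim T"
  shows "f ` S = T"
proof -
  obtain B where B: "B \<subseteq> S" "independent B" "S \<subseteq> span B" "card B = dim S"
    using basis_exists by blast
  have span_B: "span B = S"
    using span_subspace[OF B(1,3) S] .
  have indep_fB: "independent (f ` B)"
    using linear_independent_injective_image[OF f B(2)] inj unfolding span_B .
  have card_fB: "card (f ` B) = dim T"
    using card_image[OF inj_on_subset[OF inj B(1)]] B(4) dims by simp
  obtain CT where "finite CT" and T_eq: "T = span CT"
    using T unfolding fin_dim_subspace_def by blast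
  obtain D where D: "D \<subseteq> T" "independent D" "T \<subseteq> span D" "card D = dim T"
    using basis_exists by blast
  have "D \<subseteq> span CT"
    using D(1) unfolding T_eq .
  then have "finite D"
    using independent_span_bound[OF \<open>finite CT\<close> D(2)] by blast
  have "x \<in> span (f ` B)" if "x \<in> T" for x
  proof (rule ccontr)
    assume x: "x \<notin> span (f ` B)"
    then have "x \<notin> f ` B"
      using span_base[of x "f ` B"] by blast
    have "independent (insert x (f ` B))"
      using indep_fB x by (simp add: independent_insert)
    moreover have "insert x (f ` B) \<subseteq> span D"
      using that into B(1) D(3) by blast
    ultimately have "finite (insert x (f ` B)) \<and> card (insert x (f ` B)) \<le> card D"
      by (rule independent_span_bound[OF \<open>finite D\<close>])
    with \<open>x \<notin> f ` B\<close> show False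
      using card_fB D(4) by auto
  qed
  then have "T \<subseteq> f ` S"
    unfolding linear_span_image[OF f] span_B by blast
  with into show ?thesis
    by blast
qed

lemma compact_operator_approx_fixed_point:
  fixes K :: "'a::real_normed_vector \<Rightarrow> 'a"
  assumes K: "compact_operator K" and unit: "\<And>n. norm (u n) = 1"
    and approx: "(\<lambda>n. u n - K (u n)) \<longlonglongrightarrow> 0"
  obtains l where "norm l = 1" and "K l = l"
proof -
  have "bounded_linear K" and cpt: "compact (closure (K ` cball 0 1))"
    using K unfolding compact_operator_def by auto
  have "u n \<in> cball 0 1" for n
    using unit[of n] by simp
  then have "\<forall>n. K (u n) \<in> closure (K ` cball 0 1)"
    using closure_subset by blast
  then obtain l r where r: "strict_mono r" and "((\<lambda>n. K (u n)) \<circ> r) \<longlonglongrightarrow> l"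
    using seq_compactE[OF compact_imp_seq_compact[OF cpt], where f = "\<lambda>n. K (u n)"] by blast
  then have Kl: "(\<lambda>n. K (u (r n))) \<longlonglongrightarrow> l"
    by (simp add: o_def)
  have "(\<lambda>n. u (r n) - K (u (r n))) \<longlonglongrightarrow> 0"
    using LIMSEQ_subseq_LIMSEQ[OF approx r] by (simp add: o_def)
  from tendsto_add[OF Kl this] have ul: "(\<lambda>n. u (r n)) \<longlonglongrightarrow> l"
    by simp
  have "norm l = 1"
    using tendsto_norm[OF ul] unit by (simp add: LIMSEQ_const_iff)
  moreover have "K l = l"
    using LIMSEQ_unique[OF bounded_linear.tendsto[OF \<open>bounded_linear K\<close> ul] Kl] .
  ultimately show thesis by (rule that)
qed

lemma compact_operator_bounded_below:
  fixes K :: "'a::real_normed_vector \<Rightarrow> 'a"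
  assumes K: "compact_operator K" and inj: "inj (\<lambda>x. x - K x)"
  obtains c where "c > 0" and "\<And>x. c * norm x \<le> norm (x - K x)"
proof (rule ccontr)
  assume "\<not> thesis"
  have "\<exists>x. norm (x - K x) < 1 / (real n + 1) * norm x" for n
  proof -
    have "1 / (real n + 1) > 0"
      by simp
    then show ?thesis
      using that[of "1 / (real n + 1)"] \<open>\<not> thesis\<close> by (meson not_le)
  qed
  then obtain x where x: "\<And>n. norm (x n - K (x n)) < 1 / (real n + 1) * norm (x n)"
    by metis
  have "linear K"
    using K unfolding compact_operator_def using bounded_linear.linear by blast
  have "x n \<noteq> 0" for n
    using x[of n] \<open>linear K\<close> by (auto simp: linear_0)
  define u where "u n = (1 / norm (x n)) *\<^sub>R x n" for n
  have unit: "norm (u n) = 1" for n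
    using \<open>x n \<noteq> 0\<close> unfolding u_def by simp
  have small: "norm (u n - K (u n)) < 1 / (real n + 1)" for n
  proof -
    have "u n - K (u n) = (1 / norm (x n)) *\<^sub>R (x n - K (x n))"
      using \<open>linear K\<close> unfolding u_def by (simp add: linear_scale scaleR_diff_right)
    then show ?thesis
      using x[of n] \<open>x n \<noteq> 0\<close> by (simp add: divide_less_eq)
  qed
  have "(\<lambda>n. u n - K (u n)) \<longlonglongrightarrow> 0"
  proof (rule tendsto_norm_zero_cancel, rule Lim_null_comparison)
    show "\<forall>\<^sub>F n in sequentially. norm (norm (u n - K (u n))) \<le> 1 / (real n + 1)"
      using small by (auto intro!: always_eventually less_imp_le)
    show "(\<lambda>n. 1 / (real n + 1)) \<longlonglongrightarrow> 0"
      using LIMSEQ_inverse_real_of_nat by (simp add: inverse_eq_divide add.commute)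
  qed
  then obtain l where "norm l = 1" and "K l = l"
    using compact_operator_approx_fixed_point[where u = u, OF K unit] by blast
  then have "l - K l = 0 - K 0"
    using \<open>linear K\<close> by (simp add: linear_0)
  with inj have "l = 0"
    by (rule injD)
  with \<open>norm l = 1\<close> show False by simp
qed

lemma inj_diff_if_onorm_close:
  fixes K K' :: "'a::real_normed_vector \<Rightarrow> 'a"
  assumes below: "\<And>x. c * norm x \<le> norm (x - K x)"
    and "bounded_linear K" and "bounded_linear K'"
    and close: "onorm (\<lambda>x. K' x - K x) < c"
  shows "inj (\<lambda>x. x - K' x)"
proof -
  have lin: "linear (\<lambda>x. x - K' x)"
    by (intro linear_compose_sub linear_ident bounded_linear.linear[OF \<open>bounded_linear K'\<close>])
  have "x = 0" if "x - K' x = 0" for x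
  proof (rule ccontr)
    assume "x \<noteq> 0"
    have "c * norm x \<le> norm (K' x - K x)"
      using below[of x] that by (simp add: algebra_simps)
    also have "\<dots> \<le> onorm (\<lambda>x. K' x - K x) * norm x"
      using onorm[OF bounded_linear_sub[OF \<open>bounded_linear K'\<close> \<open>bounded_linear K\<close>]] .
    finally show False
      using close \<open>x \<noteq> 0\<close> by simp
  qed
  then show ?thesis
    using linear_inj_iff_eq_0[OF lin] by blast
qed

lemma inj_on_if_left_regularized:
  assumes regularized: "\<And>u. u \<in> S \<Longrightarrow> Q (A u) = u - K u" and inj: "inj (\<lambda>x. x - K x)"
  shows "inj_on A S"
proof (rule inj_on_imageI2[where f' = Q])
  show "inj_on (Q \<circ> A) S"
    using inj by (subst inj_on_cong[where g = "\<lambda>u. u - K u"])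
      (auto simp: regularized intro: inj_on_subset)
qed

lemma bij_betw_projected_operator:
  fixes L0 L1 :: "'v::real_normed_vector \<Rightarrow> 'w::real_normed_vector"
    and P :: "'v \<Rightarrow> 'v" and Q :: "'w \<Rightarrow> 'w"
  assumes "linear L0" "linear L1" "linear P" "linear Q"
    and commute: "\<And>x. L0 (P x) = Q (L0 x)"
    and fin_dim: "fin_dim_subspace (range Q)" and dims: "dim (range P) = dim (range Q)"
    and inj: "inj_on (\<lambda>u. L0 u + Q (L1 u)) (range P)"
  shows "bij_betw (\<lambda>u. L0 u + Q (L1 u)) (range P) (range Q)"
proof -
  have lin: "linear (\<lambda>u. L0 u + Q (L1 u))"
    using \<open>linear L0\<close> \<open>linear L1\<close> \<open>linear Q\<close>
    by (intro linear_compose_add) (auto intro: linear_compose[unfolded o_def])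
  have "L0 (P x) + Q (L1 (P x)) = Q (L0 x + L1 (P x))" for x
    using commute \<open>linear Q\<close> by (simp add: linear_add)
  then have "(\<lambda>u. L0 u + Q (L1 u)) ` range P \<subseteq> range Q"
    by auto
  then show ?thesis
    unfolding bij_betw_def
    using linear_inj_on_image_eq[OF lin linear_subspace_image[OF \<open>linear P\<close> subspace_UNIV]
        inj _ fin_dim dims] inj by blast
qed

lemma projected_solutions_diff_le:
  fixes L0 L1 :: "'v::real_normed_vector \<Rightarrow> 'w::real_normed_vector" and P I :: "'w \<Rightarrow> 'w"
    and S :: "'v set" and T :: "'w set" and f :: 'w
  defines "AP \<equiv> \<lambda>u. L0 u + P (L1 u)" and "AI \<equiv> \<lambda>u. L0 u + I (L1 u)"
  defines "u \<equiv> the_inv_into S AP (P f)"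
  assumes "linear L0" "linear L1" "linear P" "linear I"
    and S: "subspace S" and T: "fin_dim_subspace T"
    and bij_AP: "bij_betw AP S T" and bij_AI: "bij_betw AI S T"
    and "P f \<in> T" and "I f \<in> T"
  shows "norm (u - the_inv_into S AI (I f))
    \<le> opnorm_on T (the_inv_into S AI) * norm (I (f - L1 u) - P (f - L1 u))"
proof -
  define v where "v = the_inv_into S AI (I f)"
  define w where "w = I (f - L1 u) - P (f - L1 u)"
  have u: "u \<in> S" "AP u = P f"
    using bij_AP \<open>P f \<in> T\<close> unfolding u_def
    by (auto intro: the_inv_into_into f_the_inv_into_f_bij_betw simp: bij_betw_def)
  have v: "v \<in> S" "AI v = I f"
    using bij_AI \<open>I f \<in> T\<close> unfolding v_def
    by (auto intro: the_inv_into_into f_the_inv_into_f_bij_betw simp: bij_betw_def)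
  have "linear AI"
    unfolding AI_def using \<open>linear L0\<close> \<open>linear L1\<close> \<open>linear I\<close>
    by (intro linear_compose_add) (auto intro: linear_compose[unfolded o_def])
  have "L0 u = P f - P (L1 u)"
    using u(2) unfolding AP_def by (simp add: eq_diff_eq)
  then have "AI v - AI u = w"
    using v(2) \<open>linear P\<close> \<open>linear I\<close> unfolding AI_def w_def by (simp add: linear_diff)
  with \<open>linear AI\<close> have AI_diff: "AI (v - u) = w"
    by (simp add: linear_diff)
  have inj_AI: "inj_on AI S"
    using bij_AI by (simp add: bij_betw_def)
  obtain g where "linear g" and g: "\<And>y. y \<in> AI ` S \<Longrightarrow> the_inv_into S AI y = g y"
    using linear_extension_the_inv_into[OF \<open>linear AI\<close> S inj_AI] by blast
  have "v - u \<in> S"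
    using u v S by (simp add: subspace_diff)
  then have "g w = v - u" and "w \<in> T"
    using g[of w] the_inv_into_f_f[OF inj_AI] AI_diff bij_AI by (auto simp: bij_betw_def)
  then have "norm (u - v) \<le> opnorm_on T g * norm w"
    using norm_le_opnorm_on[OF T \<open>linear g\<close> \<open>w \<in> T\<close>] by (simp add: norm_minus_commute)
  also have "opnorm_on T g = opnorm_on T (the_inv_into S AI)"
    using g bij_AI by (intro opnorm_on_cong) (simp add: bij_betw_def)
  finally show ?thesis
    unfolding v_def w_def .
qed

theorem theoremt:
  fixes PV :: "nat \<Rightarrow> 'v::banach \<Rightarrow> 'v"
    and PW :: "nat \<Rightarrow> 'w::banach \<Rightarrow> 'w"
    and L L0 L1 :: "'v \<Rightarrow> 'w"
    and R R0 R1 :: "'w \<Rightarrow> 'v"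
    and R1N :: "nat \<Rightarrow> 'w \<Rightarrow> 'v"
    and KN :: "nat \<Rightarrow> 'v \<Rightarrow> 'v"
    and K :: "'v \<Rightarrow> 'v"
    and W' :: "'w set"
    and IW :: "nat \<Rightarrow> 'w \<Rightarrow> 'w"
    and N0 :: nat
  assumes sepV: "separable_space (euclidean :: 'v topology)"
    and sepW: "separable_space (euclidean :: 'w topology)"
    and PV_proj: "\<And>N. bounded_projection (PV N)"
    and PW_proj: "\<And>N. bounded_projection (PW N)"
    and PV_fd: "\<And>N. fin_dim_subspace (range (PV N))"
    and PW_fd: "\<And>N. fin_dim_subspace (range (PW N))"
    and PV_strong: "\<And>x. (\<lambda>N. PV N x) \<longlonglongrightarrow> x"
    and PW_strong: "\<And>y. (\<lambda>N. PW N y) \<longlonglongrightarrow> y"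
    and adm: "admissible PV PW L L0 L1 R R0 R1"
    and L_inv: "bij L"
    and R_inv: "bij R"
    and K_def: "\<And>x. R (L x) = x - K x"
    and K_compact: "compact_operator K"
    and R1N_lin: "\<And>N. linear (R1N N)"
    and R1N_maps: "\<And>N. R1N N ` range (PW N) \<subseteq> range (PV N)"
    and KN_bl: "\<And>N. bounded_linear (KN N)"
    and KN_eq: "\<And>N u. u \<in> range (PV N) \<Longrightarrow>
                 R0 (L0 u + PW N (L1 u)) + R1N N (L0 u + PW N (L1 u)) = u - KN N u"
    and KN_conv: "(\<lambda>N. onorm (\<lambda>x. KN N x - K x)) \<longlonglongrightarrow> 0"
    and dims: "\<And>N. dim (range (PV N)) = dim (range (PW N))"
    and W'_sub: "subspace W'"
    and W'_dense: "closure W' = UNIV"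
    and IW_lin: "\<And>N. linear (IW N)"
    and IW_idem: "\<And>N y. IW N (IW N y) = IW N y"
    and IW_conv: "\<And>u. u \<in> W' \<Longrightarrow> (\<lambda>N. norm (u - IW N u)) \<longlonglongrightarrow> 0"
    and IW_range: "\<And>N. IW N ` W' = range (PW N)"
    and AI_inv: "\<And>N. N \<ge> N0 \<Longrightarrow>
                   bij_betw (\<lambda>u. L0 u + IW N (L1 u)) (range (PV N)) (range (PW N))"
  shows "\<exists>N1. \<forall>N\<ge>N1. \<forall>f\<in>W'.
     (let AP = (\<lambda>u. L0 u + PW N (L1 u));
          AI = (\<lambda>u. L0 u + IW N (L1 u));
          APinv = the_inv_into (range (PV N)) AP;
          AIinv = the_inv_into (range (PV N)) AI;
          uN = APinv (PW N f)
      in norm (uN - AIinv (IW N f))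
         \<le> opnorm_on (IW N ` W') AIinv * norm (IW N (f - L1 uN) - PW N (f - L1 uN)))"
proof -
  have "linear L0" "linear L1" and commute: "\<And>N x. L0 (PV N x) = PW N (L0 x)"
    using adm bounded_linear.linear unfolding admissible_def by blast+
  have "linear (PV N)" "linear (PW N)" for N
    using PV_proj PW_proj bounded_linear.linear unfolding bounded_projection_def by blast+
  have "bounded_linear K"
    using K_compact unfolding compact_operator_def by blast
  have "inj (\<lambda>x. x - K x)"
    using inj_compose[OF bij_is_inj[OF R_inv] bij_is_inj[OF L_inv]] K_def by (simp add: o_def)
  then obtain c where "c > 0" and below: "\<And>x. c * norm x \<le> norm (x - K x)"
    using compact_operator_bounded_below[OF K_compact] by blast
  obtain N1 where close: "\<And>N. N \<ge> N1 \<Longrightarrow> onorm (\<lambda>x. KN N x - K x) < c"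
    using order_tendstoD(2)[OF KN_conv \<open>c > 0\<close>] by (auto simp: eventually_sequentially)
  have bij_AP: "bij_betw (\<lambda>u. L0 u + PW N (L1 u)) (range (PV N)) (range (PW N))"
    if "N \<ge> N1" for N
    using bij_betw_projected_operator[OF \<open>linear L0\<close> \<open>linear L1\<close> \<open>linear (PV N)\<close>
        \<open>linear (PW N)\<close> commute PW_fd dims
        inj_on_if_left_regularized[where Q = "\<lambda>y. R0 y + R1N N y" and A = "\<lambda>u. L0 u + PW N (L1 u)",
          OF KN_eq inj_diff_if_onorm_close[OF below \<open>bounded_linear K\<close> KN_bl close[OF that]]]] .
  have IW_f: "IW N f \<in> range (PW N)" if "f \<in> W'" for N f
    using IW_range that by blast
  show ?thesis
    unfolding Let_def IW_range
    by (intro exI[of _ "max N0 N1"] allI impI ballI projected_solutions_diff_le)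
      (auto intro: bij_AP AI_inv IW_f linear_subspace_image[OF \<open>linear (PV _)\<close> subspace_UNIV]
        simp: \<open>linear L0\<close> \<open>linear L1\<close> \<open>linear (PW _)\<close> IW_lin PW_fd)
qed

end
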